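(* Let $x$ be a grid function with $x_s\neq 0$ at every node that satisfies the scheme (S) with $\check B\equiv 0$. Then at every node the discrete energy conservation law $$\frac12\Big(x_t^2+x_s^{-1}+\hat x_s^{-1}+\alpha^2x_s\hat x_s\Big)_{\check t}+\frac12\Big((x_t^++\check x_t^+)\big((\hat x_s\check x_s)^{-1}-\alpha^2x_s\big)\Big)_{\bar s}=0$$ holds. Equivalently, the left-hand side equals $\frac{x_t+\check x_t}{2}$ times the left-hand side of (S), for any grid function $x$ with $x_s\ne0$.
   Context: Fix mesh steps $\tau>0$, $h>0$ and a constant $\alpha\in\mathbb R$. A grid function is a real-valued function $f=f(t,s)$ on the uniform orthogonal mesh $\{(n\tau,kh): n,k\in\mathbb Z\}$; at the node $(n\tau,kh)$ the symbol $t$ denotes the number $n\tau$. Shifts: $\hat f=f(t+\tau,s)$, $\check f=f(t-\tau,s)$, $f^+=f_+=f(t,s+h)$, $f^-=f_-=f(t,s-h)$; a shift applied to a composite expression shifts the whole expression (e.g. $\hat x_s$ is $x_s$ evaluated at $(t+\tau,s)$, $\check x_t$ is $x_t$ evaluated at $(t-\tau,s)$, $x_t^+$ is $x_t$ evaluated at $(t,s+h)$, $\check x_t^+$ is $x_t$ evaluated at $(t-\tau,s+h)$). Differences: $f_t=(\hat f-f)/\tau$, $f_{\check t}=(f-\check f)/\tau$, $f_s=(f_+-f)/h$, $f_{\bar s}=(f-f_-)/h$; iterated differences compose, e.g. $x_{t\check t}=(x_t)_{\check t}=(\hat x-2x+\check x)/\tau^2$ and $x_{s\bar s}=(x_s)_{\bar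 s}=(x_+-2x+x_-)/h^2$. Given a grid function $x$ with $x_s\neq0$ everywhere and a grid function $\check B$ (an approximation of the bottom-slope term), the scheme (S) is the requirement that at every node $$x_{t\check t}-\alpha^2x_{s\bar s}+\Big(\frac{1}{\hat x_s\check x_s}\Big)_{\bar s}-\check B=0 .$$ *)

theory Defs
  imports Complex_Main
begin

text \<open>Grid functions: f n k is the value at the node (n*tau, k*h).\<close>
type_synonym grid = "int \<Rightarrow> int \<Rightarrow> real"

definition hat :: "grid \<Rightarrow> grid" where "hat f = (\<lambda>n k. f (n+1) k)"
definition chk :: "grid \<Rightarrow> grid" where "chk f = (\<lambda>n k. f (n-1) k)"
definition splus :: "grid \<Rightarrow> grid" where "splus f = (\<lambda>n k. f n (k+1))"
definition sminus :: "grid \<Rightarrow> grid" where "sminus f = (\<lambda>n k. f n (k-1))"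

definition dt :: "real \<Rightarrow> grid \<Rightarrow> grid" where "dt \<tau> f = (\<lambda>n k. (hat f n k - f n k) / \<tau>)"
definition dtb :: "real \<Rightarrow> grid \<Rightarrow> grid" where "dtb \<tau> f = (\<lambda>n k. (f n k - chk f n k) / \<tau>)"
definition ds :: "real \<Rightarrow> grid \<Rightarrow> grid" where "ds h f = (\<lambda>n k. (splus f n k - f n k) / h)"
definition dsb :: "real \<Rightarrow> grid \<Rightarrow> grid" where "dsb h f = (\<lambda>n k. (f n k - sminus f n k) / h)"

text \<open>Left-hand side of the scheme (S) with bottom term B (B plays the role of check B).\<close>
definition schemeLHS :: "real \<Rightarrow> real \<Rightarrow> real \<Rightarrow> grid \<Rightarrow> grid \<Rightarrow> grid" where
  "schemeLHS \<tau> h \<alpha> B x = (\<lambda>n k.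
     dtb \<tau> (dt \<tau> x) n k - \<alpha>^2 * dsb h (ds h x) n k
     + dsb h (\<lambda>n k. 1 / (hat (ds h x) n k * chk (ds h x) n k)) n k - B n k)"

definition energyLHS :: "real \<Rightarrow> real \<Rightarrow> real \<Rightarrow> grid \<Rightarrow> grid" where
  "energyLHS \<tau> h \<alpha> x = (\<lambda>n k.
     1/2 * dtb \<tau> (\<lambda>n k. (dt \<tau> x n k)^2 + 1 / ds h x n k + 1 / hat (ds h x) n k
                         + \<alpha>^2 * ds h x n k * hat (ds h x) n k) n k
   + 1/2 * dsb h (\<lambda>n k. (splus (dt \<tau> x) n k + splus (chk (dt \<tau> x)) n k)
                         * (1 / (hat (ds h x) n k * chk (ds h x) n k) - \<alpha>^2 * ds h x n k)) n k)"

end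

theory Submission
  imports Defs
begin

text \<open>Multiply (S) by the mean velocity (x_t + check x_t)/2 and read every term as a discrete
  product rule. The inertial term gives (x_t^2/2) differenced backward in time at once. The two
  remaining terms trade a backward time difference of a function of x_s for a backward space
  difference of a flux, using only that mixed differences commute:
  hat x_s - check x_s is tau times the forward space difference of x_t + check x_t.\<close>

lemma hat_ds_minus_chk_ds:
  fixes \<tau> h :: real and x :: grid
  assumes "\<tau> \<noteq> 0"
  shows "hat (ds h x) n k - chk (ds h x) n k
           = \<tau> * ds h (\<lambda>n k. dt \<tau> x n k + chk (dt \<tau> x) n k) n k"
  using assms by (cases "h = 0") (simp_all add: hat_def chk_def ds_def dt_def splus_def field_simps)

text \<open>At a node, v, vc, w' stand for x_t, check x_t, x_t^+ + check x_t^+; p, ph, pc, pm for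
  x_s, hat x_s, check x_s, x_s^-; and q for 1/(hat x_s check x_s) at the node below.\<close>
lemma discrete_energy_identity:
  fixes \<tau> h \<alpha> v vc w' p ph pc pm q :: real
  assumes "\<tau> \<noteq> 0" "h \<noteq> 0" "ph \<noteq> 0" "pc \<noteq> 0"
    and mixed_differences: "ph - pc = \<tau> * ((w' - (v + vc)) / h)"
  shows "1/2 * ((v\<^sup>2 + 1/p + 1/ph + \<alpha>\<^sup>2 * p * ph - (vc\<^sup>2 + 1/pc + 1/p + \<alpha>\<^sup>2 * pc * p)) / \<tau>)
       + 1/2 * ((w' * (1/(ph * pc) - \<alpha>\<^sup>2 * p) - (v + vc) * (q - \<alpha>\<^sup>2 * pm)) / h)
       = (v + vc) / 2 * ((v - vc) / \<tau> - \<alpha>\<^sup>2 * ((p - pm) / h) + (1/(ph * pc) - q) / h)"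
    (is "?energy = ?rhs")
proof -
  have kinetic: "1/2 * ((v\<^sup>2 - vc\<^sup>2) / \<tau>) = (v + vc) / 2 * ((v - vc) / \<tau>)"
    by (simp add: power2_eq_square square_diff_square_factored)
  have elastic: "\<alpha>\<^sup>2 / 2 * (p * (ph - pc) / \<tau> - (w' * p - (v + vc) * pm) / h)
                   = - ((v + vc) / 2 * (\<alpha>\<^sup>2 * ((p - pm) / h)))"
    using assms(1,2) unfolding mixed_differences by (simp add: field_simps)
  have pressure: "1/2 * ((1/ph - 1/pc) / \<tau> + (w' / (ph * pc) - (v + vc) * q) / h)
                    = (v + vc) / 2 * ((1/(ph * pc) - q) / h)"
  proof -
    have "1/ph - 1/pc = - (ph - pc) / (ph * pc)"
      using assms(3,4) by (simp add: field_simps)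
    also have "\<dots> = - (\<tau> * (w' - (v + vc))) / (h * ph * pc)"
      unfolding mixed_differences by simp
    finally have "1/ph - 1/pc = - (\<tau> * (w' - (v + vc))) / (h * ph * pc)" .
    then show ?thesis
      using assms(1-4) by (simp add: field_simps)
  qed
  have "?energy = 1/2 * ((v\<^sup>2 - vc\<^sup>2) / \<tau>)
       + \<alpha>\<^sup>2 / 2 * (p * (ph - pc) / \<tau> - (w' * p - (v + vc) * pm) / h)
       + 1/2 * ((1/ph - 1/pc) / \<tau> + (w' / (ph * pc) - (v + vc) * q) / h)"
    by (simp add: diff_divide_distrib add_divide_distrib algebra_simps)
  also have "\<dots> = ?rhs"
    unfolding kinetic elastic pressure by (simp add: algebra_simps)
  finally show ?thesis .
qed

lemma energyLHS_eq_mean_velocity_times_schemeLHS: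
  fixes \<tau> h \<alpha> :: real and x :: grid
  assumes "\<tau> \<noteq> 0" and "h \<noteq> 0" and nz: "\<forall>n k. ds h x n k \<noteq> 0"
  shows "energyLHS \<tau> h \<alpha> x n k
           = (dt \<tau> x n k + chk (dt \<tau> x) n k) / 2 * schemeLHS \<tau> h \<alpha> (\<lambda>_ _. 0) x n k"
proof -
  have mixed_differences: "ds h x (n + 1) k - ds h x (n - 1) k
      = \<tau> * (((dt \<tau> x n (k + 1) + dt \<tau> x (n - 1) (k + 1)) - (dt \<tau> x n k + dt \<tau> x (n - 1) k)) / h)"
    using hat_ds_minus_chk_ds[OF assms(1), of h x n k]
    by (simp add: hat_def chk_def ds_def[where f = "\<lambda>n k. dt \<tau> x n k + dt \<tau> x (n - 1) k"] splus_def)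
  show ?thesis
    using discrete_energy_identity[OF assms(1,2) nz[rule_format] nz[rule_format] mixed_differences,
        where \<alpha> = \<alpha> and p = "ds h x n k" and pm = "ds h x n (k - 1)"
          and q = "1 / (ds h x (n + 1) (k - 1) * ds h x (n - 1) (k - 1))"]
    unfolding energyLHS_def schemeLHS_def dtb_def dsb_def hat_def chk_def splus_def sminus_def
    by simp
qed

theorem mainTheorem3:
  fixes \<tau> h \<alpha> :: real and x :: grid
  assumes "\<tau> > 0" and "h > 0"
    and "\<forall>n k. ds h x n k \<noteq> 0"
  shows "(\<forall>n k. energyLHS \<tau> h \<alpha> x n k
            = (dt \<tau> x n k + chk (dt \<tau> x) n k) / 2 * schemeLHS \<tau> h \<alpha> (\<lambda>_ _. 0) x n k)
       \<and> ((\<forall>n k. schemeLHS \<tau> h \<alpha> (\<lambda>_ _. 0) x n k = 0) \<longrightarrow> (\<forall>n k. energyLHS \<tau> h \<alpha> x n k = 0))"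
  using energyLHS_eq_mean_velocity_times_schemeLHS[of \<tau> h x \<alpha>] assms by auto

end
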